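(* Let $f(x|\theta,\sigma,m)=\frac{2}{\sigma}\varphi\!\left(\frac{x-\theta}{\sigma}\right)\Phi\!\left(\frac{m(x-\theta)}{\sigma}\right)$ be the skew-normal density, regarded as a function of $(\theta,v,m)$ with $v=\sigma^2>0$. Then for all $x,\theta\in\mathbb{R}$, $v>0$, $m\in\mathbb{R}$: $$\frac{\partial^2 f}{\partial\theta^2}-2\frac{\partial f}{\partial v}+\frac{m^3+m}{v}\frac{\partial f}{\partial m}=0,\qquad 2m\frac{\partial f}{\partial m}+(m^2+1)\frac{\partial^2 f}{\partial m^2}+2vm\frac{\partial^2 f}{\partial v\,\partial m}=0.$$
   Context: $\varphi$ is the standard normal density and $\Phi$ the standard normal distribution function. *)

theory Defs
  imports "HOL-Probability.Probability"
begin

definition std_normal_cdf :: "real \<Rightarrow> real" where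
  "std_normal_cdf x = (LBINT t:{..x}. std_normal_density t)"

definition skew_normal_density :: "real \<Rightarrow> real \<Rightarrow> real \<Rightarrow> real \<Rightarrow> real" where
  "skew_normal_density x \<theta> \<sigma> m =
     2 / \<sigma> * std_normal_density ((x - \<theta>) / \<sigma>) * std_normal_cdf (m * (x - \<theta>) / \<sigma>)"

definition skew_normal_v :: "real \<Rightarrow> real \<Rightarrow> real \<Rightarrow> real \<Rightarrow> real" where
  "skew_normal_v x \<theta> v m = skew_normal_density x \<theta> (sqrt v) m"

end

theory Submission
  imports Defs
begin

text \<open>With \<open>z = (x - \<theta>)/\<sigma>\<close>, every partial derivative of the skew-normal density is an
  explicit combination of \<open>\<phi>(z)\<Phi>(mz)\<close> and \<open>\<phi>(z)\<phi>(mz)\<close>; the derivatives in \<open>v = \<sigma>\<^sup>2\<close> are the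
  \<open>\<sigma>\<close>-derivatives divided by \<open>2\<sigma>\<close>. Substituting these closed forms, the \<open>\<phi>(z)\<Phi>(mz)\<close> terms
  cancel between \<open>\<partial>\<^sup>2f/\<partial>\<theta>\<^sup>2\<close> and \<open>2 \<partial>f/\<partial>v\<close>, and what remains in both identities is a
  polynomial identity in \<open>m\<close> and \<open>z\<close>.\<close>

lemma interval_lebesgue_integrable_std_normal_density:
  "interval_lebesgue_integrable lborel a b std_normal_density"
  unfolding interval_lebesgue_integrable_def set_integrable_def
  by auto (subst mult.commute, rule integrable_real_mult_indicator, auto)+

lemma std_normal_cdf_eq_interval_integral:
  "std_normal_cdf y =
     (LBINT t=-\<infinity>..ereal 0. std_normal_density t) + (LBINT t=ereal 0..ereal y. std_normal_density t)"
  unfolding std_normal_cdf_def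
  by (subst interval_integral_sum[OF interval_lebesgue_integrable_std_normal_density])
     (auto simp: interval_integral_Icc' atMost_def)

lemma has_real_derivative_std_normal_cdf:
  "(std_normal_cdf has_real_derivative std_normal_density y) (at y)"
proof -
  define a where "a = min 0 y - 1"
  define b where "b = max 0 y + 1"
  have cont: "continuous_on {a..b} std_normal_density"
    unfolding std_normal_density_def by (intro continuous_intros) auto
  have "((\<lambda>u. LBINT t=ereal 0..ereal u. std_normal_density t)
      has_vector_derivative std_normal_density y) (at y within {a..b})"
    by (rule interval_integral_FTC2[OF _ _ cont]) (auto simp: a_def b_def)
  then have "((\<lambda>u. LBINT t=ereal 0..ereal u. std_normal_density t)
      has_vector_derivative std_normal_density y) (at y within {a<..<b})"
    by (rule has_vector_derivative_within_subset) auto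
  then have "((\<lambda>u. LBINT t=ereal 0..ereal u. std_normal_density t)
      has_vector_derivative std_normal_density y) (at y)"
    by (subst (asm) has_vector_derivative_within_open) (auto simp: a_def b_def)
  then have "((\<lambda>u. (LBINT t=-\<infinity>..ereal 0. std_normal_density t)
      + (LBINT t=ereal 0..ereal u. std_normal_density t)) has_real_derivative std_normal_density y) (at y)"
    by (auto intro!: derivative_eq_intros simp: has_real_derivative_iff_has_vector_derivative)
  then show ?thesis
    by (subst (asm) std_normal_cdf_eq_interval_integral[symmetric]) simp
qed

lemma has_real_derivative_std_normal_cdf_comp [derivative_intros]:
  "(f has_real_derivative f') (at x within S) \<Longrightarrow>
   ((\<lambda>x. std_normal_cdf (f x)) has_real_derivative std_normal_density (f x) * f') (at x within S)"
  using DERIV_chain2[OF has_real_derivative_std_normal_cdf] by blast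

lemma has_real_derivative_std_normal_density:
  "(std_normal_density has_real_derivative - y * std_normal_density y) (at y)"
  unfolding std_normal_density_def
  by (auto intro!: derivative_eq_intros simp: field_simps power2_eq_square)

lemma has_real_derivative_std_normal_density_comp [derivative_intros]:
  "(f has_real_derivative f') (at x within S) \<Longrightarrow>
   ((\<lambda>x. std_normal_density (f x)) has_real_derivative - f x * std_normal_density (f x) * f')
     (at x within S)"
  using DERIV_chain2[OF has_real_derivative_std_normal_density] by blast

lemma deriv_comp_sqrt:
  assumes "(g has_real_derivative D) (at (sqrt v))" and "v > 0"
  shows "deriv (\<lambda>w. g (sqrt w)) v = D / (2 * sqrt v)"
proof (rule DERIV_imp_deriv)
  show "((\<lambda>w. g (sqrt w)) has_real_derivative D / (2 * sqrt v)) (at v)"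
    using DERIV_chain2[OF assms(1) DERIV_real_sqrt[OF assms(2)]] by (simp add: field_simps)
qed

lemma deriv_skew_normal_density_theta:
  assumes "\<sigma> \<noteq> 0"
  shows "deriv (\<lambda>t. skew_normal_density x t \<sigma> m) = (\<lambda>t. 2 / \<sigma>\<^sup>2 *
    ((x - t) / \<sigma> * std_normal_density ((x - t) / \<sigma>) * std_normal_cdf (m * (x - t) / \<sigma>)
     - m * std_normal_density ((x - t) / \<sigma>) * std_normal_density (m * (x - t) / \<sigma>)))"
proof
  fix t
  show "deriv (\<lambda>t. skew_normal_density x t \<sigma> m) t = 2 / \<sigma>\<^sup>2 *
    ((x - t) / \<sigma> * std_normal_density ((x - t) / \<sigma>) * std_normal_cdf (m * (x - t) / \<sigma>)
     - m * std_normal_density ((x - t) / \<sigma>) * std_normal_density (m * (x - t) / \<sigma>))"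
    unfolding skew_normal_density_def using assms
    by (intro DERIV_imp_deriv)
       (auto intro!: derivative_eq_intros simp: field_simps power2_eq_square)
qed

lemma has_real_derivative_skew_normal_density_sigma:
  fixes x \<theta> \<sigma> m :: real
  assumes "\<sigma> \<noteq> 0"
  defines "z \<equiv> (x - \<theta>) / \<sigma>"
  shows "((\<lambda>s. skew_normal_density x \<theta> s m) has_real_derivative 2 / \<sigma>\<^sup>2 *
    ((z\<^sup>2 - 1) * std_normal_density z * std_normal_cdf (m * z)
     - m * z * std_normal_density z * std_normal_density (m * z))) (at \<sigma>)"
  unfolding skew_normal_density_def z_def using assms(1)
  by (auto intro!: derivative_eq_intros simp: field_simps power2_eq_square power3_eq_cube)

lemma deriv_skew_normal_density_m:
  "deriv (\<lambda>n. skew_normal_density x \<theta> \<sigma> n) = (\<lambda>n.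
    2 * (x - \<theta>) / \<sigma>\<^sup>2 * std_normal_density ((x - \<theta>) / \<sigma>) * std_normal_density (n * (x - \<theta>) / \<sigma>))"
proof (cases "\<sigma> = 0")
  case True
  then show ?thesis
    by (simp add: skew_normal_density_def)
next
  case False
  show ?thesis
  proof
    fix n
    show "deriv (\<lambda>n. skew_normal_density x \<theta> \<sigma> n) n = 2 * (x - \<theta>) / \<sigma>\<^sup>2 *
      std_normal_density ((x - \<theta>) / \<sigma>) * std_normal_density (n * (x - \<theta>) / \<sigma>)"
      unfolding skew_normal_density_def using False
      by (intro DERIV_imp_deriv)
         (auto intro!: derivative_eq_intros simp: field_simps power2_eq_square)
  qed
qed

lemma has_real_derivative_deriv_skew_normal_density_m_sigma:
  fixes x \<theta> \<sigma> m :: real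
  assumes "\<sigma> \<noteq> 0"
  defines "z \<equiv> (x - \<theta>) / \<sigma>"
  shows "((\<lambda>s. deriv (\<lambda>n. skew_normal_density x \<theta> s n) m) has_real_derivative 2 / \<sigma>\<^sup>2 *
    z * ((m\<^sup>2 + 1) * z\<^sup>2 - 2) * std_normal_density z * std_normal_density (m * z)) (at \<sigma>)"
  unfolding deriv_skew_normal_density_m z_def using assms(1)
  by (auto intro!: derivative_eq_intros simp: field_simps power2_eq_square power3_eq_cube)

lemma deriv2_skew_normal_v_theta:
  fixes x \<theta> v m :: real
  assumes "v > 0"
  defines "z \<equiv> (x - \<theta>) / sqrt v"
  shows "deriv (\<lambda>t. deriv (\<lambda>s. skew_normal_v x s v m) t) \<theta> = 2 / sqrt v ^ 3 *
    ((z\<^sup>2 - 1) * std_normal_density z * std_normal_cdf (m * z)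
     - (m\<^sup>2 + 2) * m * z * std_normal_density z * std_normal_density (m * z))"
proof -
  define \<sigma> where "\<sigma> = sqrt v"
  have "\<sigma> \<noteq> 0"
    using assms(1) by (simp add: \<sigma>_def)
  then show ?thesis
    unfolding skew_normal_v_def z_def \<sigma>_def[symmetric] deriv_skew_normal_density_theta[OF \<open>\<sigma> \<noteq> 0\<close>]
    by (intro DERIV_imp_deriv)
       (auto intro!: derivative_eq_intros simp: field_simps power2_eq_square power3_eq_cube)
qed

lemma deriv_skew_normal_v_variance:
  fixes x \<theta> v m :: real
  assumes "v > 0"
  defines "z \<equiv> (x - \<theta>) / sqrt v"
  shows "deriv (\<lambda>w. skew_normal_v x \<theta> w m) v = 1 / sqrt v ^ 3 *
    ((z\<^sup>2 - 1) * std_normal_density z * std_normal_cdf (m * z)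
     - m * z * std_normal_density z * std_normal_density (m * z))"
proof -
  define \<sigma> where "\<sigma> = sqrt v"
  have "\<sigma> > 0"
    using assms(1) by (simp add: \<sigma>_def)
  then show ?thesis
    unfolding skew_normal_v_def
    by (subst deriv_comp_sqrt[OF has_real_derivative_skew_normal_density_sigma assms(1)])
       (auto simp: z_def \<sigma>_def[symmetric] field_simps power3_eq_cube power2_eq_square)
qed

lemma deriv_skew_normal_v_m:
  fixes x \<theta> v m :: real
  defines "z \<equiv> (x - \<theta>) / sqrt v"
  shows "deriv (\<lambda>n. skew_normal_v x \<theta> v n) m =
    2 / sqrt v * z * std_normal_density z * std_normal_density (m * z)"
  unfolding skew_normal_v_def deriv_skew_normal_density_m z_def
  by (simp add: field_simps power2_eq_square)

lemma deriv2_skew_normal_v_m: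
  fixes x \<theta> v m :: real
  assumes "v > 0"
  defines "z \<equiv> (x - \<theta>) / sqrt v"
  shows "deriv (\<lambda>k. deriv (\<lambda>n. skew_normal_v x \<theta> v n) k) m =
    - 2 / sqrt v * m * z ^ 3 * std_normal_density z * std_normal_density (m * z)"
proof -
  define \<sigma> where "\<sigma> = sqrt v"
  have "\<sigma> \<noteq> 0"
    using assms(1) by (simp add: \<sigma>_def)
  then show ?thesis
    unfolding skew_normal_v_def z_def \<sigma>_def[symmetric] deriv_skew_normal_density_m
    by (intro DERIV_imp_deriv)
       (auto intro!: derivative_eq_intros simp: field_simps power2_eq_square power3_eq_cube)
qed

lemma deriv2_skew_normal_v_variance_m:
  fixes x \<theta> v m :: real
  assumes "v > 0"
  defines "z \<equiv> (x - \<theta>) / sqrt v"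
  shows "deriv (\<lambda>w. deriv (\<lambda>n. skew_normal_v x \<theta> w n) m) v = 1 / sqrt v ^ 3 *
    z * ((m\<^sup>2 + 1) * z\<^sup>2 - 2) * std_normal_density z * std_normal_density (m * z)"
proof -
  define \<sigma> where "\<sigma> = sqrt v"
  have "\<sigma> > 0"
    using assms(1) by (simp add: \<sigma>_def)
  then show ?thesis
    unfolding skew_normal_v_def
    by (subst deriv_comp_sqrt[OF has_real_derivative_deriv_skew_normal_density_m_sigma assms(1)])
       (auto simp: z_def \<sigma>_def[symmetric] field_simps power3_eq_cube power2_eq_square)
qed

theorem lemmaF2:
  fixes x \<theta> v m :: real
  assumes "v > 0"
  shows "(deriv (\<lambda>t. deriv (\<lambda>s. skew_normal_v x s v m) t) \<theta>
           - 2 * deriv (\<lambda>w. skew_normal_v x \<theta> w m) v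
           + (m ^ 3 + m) / v * deriv (\<lambda>n. skew_normal_v x \<theta> v n) m = 0)
         \<and> (2 * m * deriv (\<lambda>n. skew_normal_v x \<theta> v n) m
           + (m\<^sup>2 + 1) * deriv (\<lambda>k. deriv (\<lambda>n. skew_normal_v x \<theta> v n) k) m
           + 2 * v * m * deriv (\<lambda>w. deriv (\<lambda>n. skew_normal_v x \<theta> w n) m) v = 0)"
proof -
  define \<sigma> where "\<sigma> = sqrt v"
  define z where "z = (x - \<theta>) / \<sigma>"
  have "\<sigma> > 0" and v: "v = \<sigma>\<^sup>2"
    using assms by (auto simp: \<sigma>_def)
  show ?thesis
    \<comment> \<open>second derivatives first: the rule for the first \<open>m\<close>-derivative would
      otherwise rewrite their inner derivative\<close>
    unfolding deriv2_skew_normal_v_theta[OF assms] deriv2_skew_normal_v_m[OF assms]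
      deriv2_skew_normal_v_variance_m[OF assms]
    unfolding deriv_skew_normal_v_variance[OF assms] deriv_skew_normal_v_m
    unfolding \<sigma>_def[symmetric] z_def[symmetric] v
    using \<open>\<sigma> > 0\<close> by (simp add: field_simps power2_eq_square power3_eq_cube)
qed

end
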